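(* Let $\kappa>\gamma\ge0$, $\chi\in\mathbb{R}$, and let $(\psi_1,\psi_2)(x,z)$ be a smooth solution, with $\psi_j,\psi_{j,x}$ decaying sufficiently fast as $|x|\to\infty$ so that all integrals below are finite and boundary terms vanish, of $$i\psi_{1,z}=-\psi_{1,xx}-\kappa\psi_2+i\gamma\psi_1+\chi(|\psi_1|^2+|\psi_2|^2)\psi_1,$$ $$i\psi_{2,z}=-\psi_{2,xx}-\kappa\psi_1-i\gamma\psi_2+\chi(|\psi_1|^2+|\psi_2|^2)\psi_2.$$ Define $S_0=\int_{\mathbb{R}}(|\psi_1|^2+|\psi_2|^2)dx$, $S_1=\int_{\mathbb{R}}(\psi_1^*\psi_2+\psi_2^*\psi_1)dx$, $S_2=i\int_{\mathbb{R}}(\psi_1^*\psi_2-\psi_2^*\psi_1)dx$, $S_3=\int_{\mathbb{R}}(|\psi_1|^2-|\psi_2|^2)dx$. Then $\dot S_0=2\gamma S_3$, $\dot S_1=0$, $\dot S_2=-2\kappa S_3$, $\dot S_3=2\gamma S_0+2\kappa S_2$; the quantities $S_1$ and $C=\kappa S_0+\gamma S_2$ are conserved; and with $\omega=\sqrt{\kappa^2-\gamma^2}$ there are constants $A_1,A_2$ such that $S_0(z)=\kappa C/\omega^2+A_1\cos(2\omega z)+A_2\sin(2\omega z)$. In particular $S_0$ is bounded in $z$.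
   Context: Overdot denotes $d/dz$. *)

theory Defs
  imports "HOL-Analysis.Analysis"
begin

text \<open>All of them are real quantities; S1, S2 are written as real
  parts of the (real-valued) complex expressions of the paper.\<close>

definition S0 :: "(real \<Rightarrow> real \<Rightarrow> complex) \<Rightarrow> (real \<Rightarrow> real \<Rightarrow> complex) \<Rightarrow> real \<Rightarrow> real" where
  "S0 p1 p2 z = (LINT x|lborel. (cmod (p1 x z))\<^sup>2 + (cmod (p2 x z))\<^sup>2)"

definition S1 :: "(real \<Rightarrow> real \<Rightarrow> complex) \<Rightarrow> (real \<Rightarrow> real \<Rightarrow> complex) \<Rightarrow> real \<Rightarrow> real" where
  "S1 p1 p2 z = (LINT x|lborel. Re (cnj (p1 x z) * p2 x z + cnj (p2 x z) * p1 x z))"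

definition S2 :: "(real \<Rightarrow> real \<Rightarrow> complex) \<Rightarrow> (real \<Rightarrow> real \<Rightarrow> complex) \<Rightarrow> real \<Rightarrow> real" where
  "S2 p1 p2 z = (LINT x|lborel. Re (\<i> * (cnj (p1 x z) * p2 x z - cnj (p2 x z) * p1 x z)))"

definition S3 :: "(real \<Rightarrow> real \<Rightarrow> complex) \<Rightarrow> (real \<Rightarrow> real \<Rightarrow> complex) \<Rightarrow> real \<Rightarrow> real" where
  "S3 p1 p2 z = (LINT x|lborel. (cmod (p1 x z))\<^sup>2 - (cmod (p2 x z))\<^sup>2)"

end

theory Submission
  imports Defs "HOL-Probability.Sinc_Integral" "HOL-Real_Asymp.Real_Asymp"
begin

text \<open>Differentiating the Stokes parameters under the integral sign and substituting the coupled
  equations, each dS_k/dz becomes a linear combination of the S_j plus the integral of an exact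
  x-derivative, which vanishes because the fields decay; the nonlinear terms cancel pointwise.
  The resulting linear system conserves S1 and C = \<kappa> S0 + \<gamma> S2, and eliminating S2 and S3
  gives S0'' = 4 \<kappa> C - 4 \<omega>^2 S0: S0 oscillates about \<kappa> C / \<omega>^2 with frequency 2 \<omega>.\<close>

lemma abs_difference_quotient_le:
  fixes g g' :: "real \<Rightarrow> real"
  assumes deriv: "\<And>z. (g has_real_derivative g' z) (at z)"
    and bound: "\<And>z. z \<in> {c-1..c+1} \<Longrightarrow> \<bar>g' z\<bar> \<le> W"
    and h: "\<bar>h\<bar> \<le> 1" "h \<noteq> 0"
  shows "\<bar>(g (c + h) - g c) / h\<bar> \<le> W"
proof -
  obtain \<xi> where \<xi>: "min c (c + h) < \<xi>" "\<xi> < max c (c + h)" "g (c + h) - g c = h * g' \<xi>"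
  proof (cases "h > 0")
    case True
    then show ?thesis using MVT2[of c "c + h" g g'] deriv that by auto
  next
    case False
    then have "h < 0" using h by auto
    then show ?thesis using MVT2[of "c + h" c g g'] deriv that by (fastforce simp: algebra_simps)
  qed
  then have "(g (c + h) - g c) / h = g' \<xi>" using h by simp
  moreover have "\<bar>g' \<xi>\<bar> \<le> W"
    using \<xi> h by (intro bound) (auto simp: min_less_iff_disj less_max_iff_disj)
  ultimately show ?thesis by simp
qed

lemma has_real_derivative_integral_lborel:
  fixes f f' :: "real \<Rightarrow> real \<Rightarrow> real"
  assumes deriv: "\<And>x z. ((\<lambda>z. f x z) has_real_derivative f' x z) (at z)"
    and meas: "\<And>z. (\<lambda>x. f x z) \<in> borel_measurable lborel" "(\<lambda>x. f' x z0) \<in> borel_measurable lborel"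
    and int: "\<And>z. integrable lborel (\<lambda>x. f x z)"
    and dom: "integrable lborel w" "\<And>x z. z \<in> {z0-1..z0+1} \<Longrightarrow> \<bar>f' x z\<bar> \<le> w x"
  shows "((\<lambda>z. LINT x|lborel. f x z) has_real_derivative (LINT x|lborel. f' x z0)) (at z0)"
  unfolding DERIV_def tendsto_at_iff_sequentially o_def
proof (intro allI impI)
  fix X :: "nat \<Rightarrow> real"
  assume X0: "\<forall>i. X i \<in> UNIV - {0}" and X: "X \<longlonglongrightarrow> 0"
  define q where "q h x = (f x (z0 + h) - f x z0) / h" for h x
  obtain N where N: "\<And>n. n \<ge> N \<Longrightarrow> \<bar>X n\<bar> < 1"
    using order_tendstoD(2)[OF tendsto_norm[OF X], of 1] by (auto simp: eventually_sequentially)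
  have "(\<lambda>n. LINT x|lborel. q (X (n + N)) x) \<longlonglongrightarrow> (LINT x|lborel. f' x z0)"
  proof (rule integral_dominated_convergence[where w=w])
    show "AE x in lborel. (\<lambda>n. q (X (n + N)) x) \<longlonglongrightarrow> f' x z0"
    proof (rule AE_I2)
      fix x
      have "(\<lambda>n. X (n + N)) \<longlonglongrightarrow> 0" "\<forall>n. X (n + N) \<in> UNIV - {0}"
        using LIMSEQ_ignore_initial_segment[OF X] X0 by auto
      moreover have "((\<lambda>h. q h x) \<longlongrightarrow> f' x z0) (at 0)"
        using deriv[of x z0] by (simp add: DERIV_def q_def)
      ultimately have "((\<lambda>h. q h x) \<circ> (\<lambda>n. X (n + N))) \<longlonglongrightarrow> f' x z0"
        by (intro tendsto_at_iff_sequentially[THEN iffD1, rule_format]) auto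
      then show "(\<lambda>n. q (X (n + N)) x) \<longlonglongrightarrow> f' x z0"
        by (simp add: o_def)
    qed
    show "AE x in lborel. norm (q (X (n + N)) x) \<le> w x" for n
    proof (rule AE_I2)
      fix x
      have "\<bar>X (n + N)\<bar> \<le> 1" "X (n + N) \<noteq> 0" using N[of "n + N"] X0 by auto
      then show "norm (q (X (n + N)) x) \<le> w x"
        unfolding q_def real_norm_def
        by (intro abs_difference_quotient_le[where g="\<lambda>z. f x z" and g'="\<lambda>z. f' x z"] deriv dom(2))
    qed
    show "(\<lambda>x. q (X (n + N)) x) \<in> borel_measurable lborel" for n
      unfolding q_def using meas(1) by measurable
  qed (fact meas dom)+
  moreover have "(LINT x|lborel. q h x) = ((LINT x|lborel. f x (z0 + h)) - (LINT x|lborel. f x z0)) / h" for h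
    unfolding q_def by (simp add: int)
  ultimately have "(\<lambda>n. ((LINT x|lborel. f x (z0 + X (n + N))) - (LINT x|lborel. f x z0)) / X (n + N))
      \<longlonglongrightarrow> (LINT x|lborel. f' x z0)"
    by simp
  then show "(\<lambda>n. ((LINT x|lborel. f x (z0 + X n)) - (LINT x|lborel. f x z0)) / X n)
      \<longlonglongrightarrow> (LINT x|lborel. f' x z0)"
    by (rule LIMSEQ_offset)
qed

lemma integral_lborel_derivative_eq_0:
  fixes F f :: "real \<Rightarrow> 'a::euclidean_space"
  assumes "\<And>x. (F has_vector_derivative f x) (at x)" "continuous_on UNIV f" "integrable lborel f"
    "(F \<longlongrightarrow> 0) at_top" "(F \<longlongrightarrow> 0) at_bot"
  shows "integral\<^sup>L lborel f = 0"
proof -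
  have "(LBINT x=-\<infinity>..\<infinity>. f x) = 0 - 0"
    by (rule interval_integral_FTC_integrable[where F=F])
       (use assms in \<open>auto simp: set_integrable_def ereal_tendsto_simps1 continuous_on_eq_continuous_at\<close>)
  then show ?thesis by (simp add: interval_lebesgue_integral_def set_lebesgue_integral_def)
qed

definition decays_on :: "real set \<Rightarrow> (real \<Rightarrow> real \<Rightarrow> complex) \<Rightarrow> bool" where
  "decays_on S g \<longleftrightarrow> (\<exists>K. \<forall>x. \<forall>z\<in>S. cmod (g x z) \<le> K / (1 + x\<^sup>2))"

lemma decays_onE:
  assumes "decays_on S g"
  obtains K where "K \<ge> 0" "\<And>x z. z \<in> S \<Longrightarrow> cmod (g x z) \<le> K / (1 + x\<^sup>2)"
proof -
  obtain K where K: "\<And>x z. z \<in> S \<Longrightarrow> cmod (g x z) \<le> K / (1 + x\<^sup>2)"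
    using assms unfolding decays_on_def by blast
  have "cmod (g x z) \<le> max K 0 / (1 + x\<^sup>2)" if "z \<in> S" for x z
    using K[OF that, of x] by (smt (verit) divide_right_mono zero_le_power2)
  then show ?thesis using that[of "max K 0"] by simp
qed

lemma decays_on_add:
  assumes "decays_on S f" "decays_on S g"
  shows "decays_on S (\<lambda>x z. f x z + g x z)"
proof -
  obtain K L where "\<And>x z. z \<in> S \<Longrightarrow> cmod (f x z) \<le> K / (1 + x\<^sup>2)"
      "\<And>x z. z \<in> S \<Longrightarrow> cmod (g x z) \<le> L / (1 + x\<^sup>2)"
    using assms by (metis decays_onE)
  then have "cmod (f x z + g x z) \<le> (K + L) / (1 + x\<^sup>2)" if "z \<in> S" for x z
    using norm_triangle_ineq[of "f x z" "g x z"] that by (smt (verit) add_divide_distrib)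
  then show ?thesis unfolding decays_on_def by blast
qed

lemma decays_on_cmult:
  assumes "decays_on S f"
  shows "decays_on S (\<lambda>x z. c * f x z)"
proof -
  obtain K where K: "\<And>x z. z \<in> S \<Longrightarrow> cmod (f x z) \<le> K / (1 + x\<^sup>2)"
    using assms by (metis decays_onE)
  have "cmod (c * f x z) \<le> cmod c * K / (1 + x\<^sup>2)" if "z \<in> S" for x z
    using mult_left_mono[OF K[OF that], of "cmod c"] by (simp add: norm_mult)
  then show ?thesis unfolding decays_on_def by blast
qed

lemma decays_on_cnj: "decays_on S f \<Longrightarrow> decays_on S (\<lambda>x z. cnj (f x z))"
  unfolding decays_on_def by simp

lemma decays_on_diff: "decays_on S f \<Longrightarrow> decays_on S g \<Longrightarrow> decays_on S (\<lambda>x z. f x z - g x z)"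
  using decays_on_add[of S f "\<lambda>x z. -1 * g x z"] decays_on_cmult[of S g "-1"] by simp

lemma decays_on_mult:
  assumes "decays_on S f" "decays_on S g"
  shows "decays_on S (\<lambda>x z. f x z * g x z)"
proof -
  obtain K L where K: "K \<ge> 0" "\<And>x z. z \<in> S \<Longrightarrow> cmod (f x z) \<le> K / (1 + x\<^sup>2)"
    and L: "L \<ge> 0" "\<And>x z. z \<in> S \<Longrightarrow> cmod (g x z) \<le> L / (1 + x\<^sup>2)"
    using assms by (metis decays_onE)
  have "cmod (f x z * g x z) \<le> K * L / (1 + x\<^sup>2)" if "z \<in> S" for x z
  proof -
    have "cmod (f x z * g x z) \<le> K / (1 + x\<^sup>2) * (L / (1 + x\<^sup>2))"
      unfolding norm_mult using K L that by (intro mult_mono) auto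
    also have "\<dots> \<le> K / (1 + x\<^sup>2) * L"
      using K(1) L(1) divide_left_mono[of 1 "1 + x\<^sup>2" L] add_pos_nonneg[OF zero_less_one zero_le_power2[of x]]
      by (intro mult_left_mono) auto
    finally show ?thesis by simp
  qed
  then show ?thesis unfolding decays_on_def by blast
qed

lemmas decays_on_intros = decays_on_cmult decays_on_add decays_on_diff decays_on_mult decays_on_cnj

lemma decays_on_dominated:
  assumes "decays_on S g"
  obtains w where "integrable lborel w" "\<And>x z. z \<in> S \<Longrightarrow> cmod (g x z) \<le> w x"
proof -
  obtain K where "\<And>x z. z \<in> S \<Longrightarrow> cmod (g x z) \<le> K / (1 + x\<^sup>2)"
    using assms by (metis decays_onE)
  moreover have "integrable lborel (\<lambda>x::real. K / (1 + x\<^sup>2))"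
    using integrable_inverse_1_plus_square by (simp add: set_integrable_def divide_inverse)
  ultimately show ?thesis using that by blast
qed

lemma decays_on_integrable:
  assumes "decays_on S g" "z \<in> S" "continuous_on UNIV (\<lambda>x. g x z)"
  shows "integrable lborel (\<lambda>x. g x z)"
proof -
  obtain w where w: "integrable lborel w" "\<And>x. cmod (g x z) \<le> w x"
    using decays_on_dominated[OF assms(1)] assms(2) by metis
  show ?thesis
  proof (rule Bochner_Integration.integrable_bound[OF w(1)])
    show "(\<lambda>x. g x z) \<in> borel_measurable lborel"
      using borel_measurable_continuous_onI[OF assms(3)] by simp
    show "AE x in lborel. norm (g x z) \<le> norm (w x)"
      by (intro AE_I2) (metis abs_ge_self order_trans real_norm_def w(2))
  qed
qed

lemma decays_on_integrable_Re:
  assumes "\<And>a b. decays_on {a..b} g" "continuous_on UNIV (\<lambda>x. g x z)"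
  shows "integrable lborel (\<lambda>x. Re (g x z))"
  using decays_on_integrable[OF assms(1) _ assms(2), of z z] by simp

lemma decays_on_tendsto:
  assumes "decays_on S g" "z \<in> S"
  shows "((\<lambda>x. g x z) \<longlongrightarrow> 0) at_top" "((\<lambda>x. g x z) \<longlongrightarrow> 0) at_bot"
proof -
  obtain K where K: "\<And>x. cmod (g x z) \<le> K / (1 + x\<^sup>2)"
    using assms by (metis decays_onE)
  have top: "((\<lambda>x::real. K / (1 + x\<^sup>2)) \<longlongrightarrow> 0) at_top"
    and bot: "((\<lambda>x::real. K / (1 + x\<^sup>2)) \<longlongrightarrow> 0) at_bot"
    by real_asymp+
  show "((\<lambda>x. g x z) \<longlongrightarrow> 0) at_top"
    by (rule Lim_null_comparison[OF always_eventually top]) (use K in blast)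
  show "((\<lambda>x. g x z) \<longlongrightarrow> 0) at_bot"
    by (rule Lim_null_comparison[OF always_eventually bot]) (use K in blast)
qed

text \<open>The flux F integrates to zero over the line, so only the source p survives.\<close>
lemma has_real_derivative_integral_balance:
  fixes Q Q' F f :: "real \<Rightarrow> real \<Rightarrow> complex" and p :: "real \<Rightarrow> real \<Rightarrow> real"
  assumes dQ: "\<And>x z. ((\<lambda>z. Q x z) has_vector_derivative Q' x z) (at z)"
    and dF: "\<And>x z. ((\<lambda>x. F x z) has_vector_derivative f x z) (at x)"
    and balance: "\<And>x z. Re (Q' x z) = p x z + Re (f x z)"
    and cont: "\<And>z. continuous_on UNIV (\<lambda>x. Q x z)" "\<And>z. continuous_on UNIV (\<lambda>x. Q' x z)"
      "\<And>z. continuous_on UNIV (\<lambda>x. f x z)"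
    and decay: "\<And>a b. decays_on {a..b} Q" "\<And>a b. decays_on {a..b} Q'"
      "\<And>a b. decays_on {a..b} F" "\<And>a b. decays_on {a..b} f"
  shows "((\<lambda>z. LINT x|lborel. Re (Q x z)) has_real_derivative (LINT x|lborel. p x z)) (at z)"
proof -
  have int: "integrable lborel (\<lambda>x. Q x z)" "integrable lborel (\<lambda>x. Q' x z)"
    "integrable lborel (\<lambda>x. f x z)" for z
    using decay(1,2,4)[of z z] cont by (auto intro: decays_on_integrable)
  obtain w where w: "integrable lborel w" "\<And>x z'. z' \<in> {z-1..z+1} \<Longrightarrow> cmod (Q' x z') \<le> w x"
    using decays_on_dominated[OF decay(2)] by metis
  have deriv: "((\<lambda>z. LINT x|lborel. Re (Q x z)) has_real_derivative (LINT x|lborel. Re (Q' x z))) (at z)"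
  proof (rule has_real_derivative_integral_lborel[OF _ _ _ _ w(1)])
    show "\<bar>Re (Q' x z')\<bar> \<le> w x" if "z' \<in> {z-1..z+1}" for x z'
      using w(2)[OF that] abs_Re_le_cmod order_trans by blast
  qed (use dQ int in \<open>auto intro: has_field_derivative_Re\<close>)
  have "(LINT x|lborel. f x z) = 0"
    using dF cont(3) int(3) decays_on_tendsto[OF decay(3)[of z z]]
    by (intro integral_lborel_derivative_eq_0[where F="\<lambda>x. F x z"]) auto
  moreover have "p x z = Re (Q' x z) - Re (f x z)" for x
    using balance[of x z] by simp
  ultimately have "(LINT x|lborel. p x z) = (LINT x|lborel. Re (Q' x z))"
    using int by (simp add: integral_diff)
  with deriv show ?thesis by simp
qed

lemma harmonic_oscillator_eq_0:
  fixes f h :: "real \<Rightarrow> real"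
  assumes df: "\<And>z. (f has_real_derivative h z) (at z)"
    and dh: "\<And>z. (h has_real_derivative - (c * f z)) (at z)"
    and c: "c > 0" and init: "f 0 = 0" "h 0 = 0"
  shows "f z = 0"
proof -
  define E where "E z = (h z)\<^sup>2 + c * (f z)\<^sup>2" for z
  have "(E has_real_derivative 2 * h z * - (c * f z) + c * (2 * f z * h z)) (at z)" for z
    unfolding E_def[abs_def] by (rule derivative_eq_intros df dh refl | simp)+
  then have "(E has_real_derivative 0) (at z)" for z
    by (simp add: algebra_simps)
  then have "E z = E 0"
    using DERIV_isconst_all[of E] by blast
  then have "(h z)\<^sup>2 + c * (f z)\<^sup>2 = 0"
    using init by (simp add: E_def)
  then have "c * (f z)\<^sup>2 \<le> 0"
    using zero_le_power2[of "h z"] by linarith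
  then show ?thesis
    using c by (simp add: mult_le_0_iff)
qed

context
  fixes s0 s2 s3 :: "real \<Rightarrow> real" and \<kappa> \<gamma> :: real
  assumes D0: "\<And>z. (s0 has_real_derivative 2 * \<gamma> * s3 z) (at z)"
    and D2: "\<And>z. (s2 has_real_derivative - 2 * \<kappa> * s3 z) (at z)"
begin

lemma stokes_combination_constant: "\<kappa> * s0 z1 + \<gamma> * s2 z1 = \<kappa> * s0 z2 + \<gamma> * s2 z2"
proof -
  have "((\<lambda>z. \<kappa> * s0 z + \<gamma> * s2 z) has_real_derivative 0) (at z)" for z
    by (rule DERIV_cong[OF DERIV_add[OF DERIV_cmult[OF D0] DERIV_cmult[OF D2]]]) (simp add: algebra_simps)
  then show ?thesis
    using DERIV_isconst_all[of "\<lambda>z. \<kappa> * s0 z + \<gamma> * s2 z"] by blast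
qed

lemma stokes_S0_sinusoidal:
  assumes D3: "\<And>z. (s3 has_real_derivative 2 * \<gamma> * s0 z + 2 * \<kappa> * s2 z) (at z)"
    and "\<gamma>\<^sup>2 < \<kappa>\<^sup>2"
  defines "\<omega> \<equiv> sqrt (\<kappa>\<^sup>2 - \<gamma>\<^sup>2)" and "C \<equiv> \<kappa> * s0 0 + \<gamma> * s2 0"
  shows "\<exists>A1 A2. \<forall>z. s0 z = \<kappa> * C / \<omega>\<^sup>2 + A1 * cos (2 * \<omega> * z) + A2 * sin (2 * \<omega> * z)"
proof -
  have \<omega>: "\<omega> > 0" "\<omega>\<^sup>2 = \<kappa>\<^sup>2 - \<gamma>\<^sup>2"
    using \<open>\<gamma>\<^sup>2 < \<kappa>\<^sup>2\<close> unfolding \<omega>_def by auto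
  have s2: "\<gamma> * s2 z = C - \<kappa> * s0 z" for z
    using stokes_combination_constant[of z 0] unfolding C_def by simp
  define P where "P = \<kappa> * C / \<omega>\<^sup>2"
  define A1 where "A1 = s0 0 - P"
  define A2 where "A2 = \<gamma> * s3 0 / \<omega>"
  define f where "f z = s0 z - (P + A1 * cos (2 * \<omega> * z) + A2 * sin (2 * \<omega> * z))" for z
  define h where "h z = 2 * \<gamma> * s3 z + 2 * \<omega> * A1 * sin (2 * \<omega> * z) - 2 * \<omega> * A2 * cos (2 * \<omega> * z)" for z
  have df: "(f has_real_derivative h z) (at z)" for z
    unfolding f_def[abs_def] h_def by (rule derivative_eq_intros D0 refl | simp add: algebra_simps)+
  have dh: "(h has_real_derivative - (4 * \<omega>\<^sup>2 * f z)) (at z)" for z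
  proof -
    have deriv: "(h has_real_derivative 2 * \<gamma> * (2 * \<gamma> * s0 z + 2 * \<kappa> * s2 z)
        + 2 * \<omega> * A1 * (cos (2 * \<omega> * z) * (2 * \<omega>)) + 2 * \<omega> * A2 * (sin (2 * \<omega> * z) * (2 * \<omega>))) (at z)"
      unfolding h_def[abs_def] by (rule derivative_eq_intros D3 refl | simp add: algebra_simps)+
    have "2 * \<gamma> * (2 * \<gamma> * s0 z + 2 * \<kappa> * s2 z) = 4 * \<gamma>\<^sup>2 * s0 z + 4 * \<kappa> * (\<gamma> * s2 z)"
      by (simp add: algebra_simps power2_eq_square)
    also have "\<dots> = 4 * \<kappa> * C - 4 * (\<kappa>\<^sup>2 - \<gamma>\<^sup>2) * s0 z"
      by (simp add: s2 algebra_simps power2_eq_square)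
    also have "\<dots> = - 4 * \<omega>\<^sup>2 * (s0 z - P)"
      using \<omega>(1) unfolding \<omega>(2)[symmetric] P_def by (simp add: field_simps)
    finally show ?thesis
      using deriv by (elim DERIV_cong) (simp add: f_def algebra_simps power2_eq_square)
  qed
  have "f z = 0" for z
    by (rule harmonic_oscillator_eq_0[OF df dh]) (use \<omega>(1) in \<open>simp_all add: f_def h_def A1_def A2_def\<close>)
  then have "s0 z = P + A1 * cos (2 * \<omega> * z) + A2 * sin (2 * \<omega> * z)" for z
    by (simp add: f_def)
  then show ?thesis
    unfolding P_def by blast
qed

end

lemma bounded_range_sinusoid: "bounded (range (\<lambda>z::real. P + A1 * cos (w * z) + A2 * sin (w * z)))"
proof -
  have "\<bar>P + A1 * cos (w * z) + A2 * sin (w * z)\<bar> \<le> \<bar>P\<bar> + \<bar>A1\<bar> + \<bar>A2\<bar>" for z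
  proof -
    have "\<bar>A1 * cos (w * z)\<bar> \<le> \<bar>A1\<bar>" "\<bar>A2 * sin (w * z)\<bar> \<le> \<bar>A2\<bar>"
      by (simp_all add: abs_mult mult_left_le)
    then show ?thesis by linarith
  qed
  then show ?thesis
    unfolding bounded_iff by auto
qed

lemma continuous_on_slice:
  assumes "continuous_on UNIV (\<lambda>(x, z). f x z)"
  shows "continuous_on UNIV (\<lambda>x. f x z)"
proof -
  have "continuous_on UNIV (\<lambda>x. (\<lambda>(x, z). f x z) (x, z))"
    by (rule continuous_on_compose2[OF assms]) (auto intro: continuous_intros)
  then show ?thesis by simp
qed

lemma S0_eq_integral_Re:
  "S0 p1 p2 z = (LINT x|lborel. Re (cnj (p1 x z) * p1 x z + cnj (p2 x z) * p2 x z))"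
  unfolding S0_def cmod_power2 by (simp add: power2_eq_square)

lemma S3_eq_integral_Re:
  "S3 p1 p2 z = (LINT x|lborel. Re (cnj (p1 x z) * p1 x z - cnj (p2 x z) * p2 x z))"
  unfolding S3_def cmod_power2 by (simp add: power2_eq_square)

locale coupler_solution =
  fixes \<kappa> \<gamma> chi :: real
    and p1 p2 p1x p2x p1xx p2xx p1z p2z :: "real \<Rightarrow> real \<Rightarrow> complex"
  assumes dx1: "\<And>x z. ((\<lambda>x. p1 x z) has_vector_derivative p1x x z) (at x)"
    and dx2: "\<And>x z. ((\<lambda>x. p2 x z) has_vector_derivative p2x x z) (at x)"
    and dxx1: "\<And>x z. ((\<lambda>x. p1x x z) has_vector_derivative p1xx x z) (at x)"
    and dxx2: "\<And>x z. ((\<lambda>x. p2x x z) has_vector_derivative p2xx x z) (at x)"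
    and dz1: "\<And>x z. ((\<lambda>z. p1 x z) has_vector_derivative p1z x z) (at z)"
    and dz2: "\<And>x z. ((\<lambda>z. p2 x z) has_vector_derivative p2z x z) (at z)"
    and smooth: "continuous_on UNIV (\<lambda>(x,z). p1 x z)" "continuous_on UNIV (\<lambda>(x,z). p2 x z)"
      "continuous_on UNIV (\<lambda>(x,z). p1x x z)" "continuous_on UNIV (\<lambda>(x,z). p2x x z)"
      "continuous_on UNIV (\<lambda>(x,z). p1xx x z)" "continuous_on UNIV (\<lambda>(x,z). p2xx x z)"
      "continuous_on UNIV (\<lambda>(x,z). p1z x z)" "continuous_on UNIV (\<lambda>(x,z). p2z x z)"
    and eq1: "\<And>x z. \<i> * p1z x z = - p1xx x z - of_real \<kappa> * p2 x z + \<i> * of_real \<gamma> * p1 x z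
                 + of_real (chi * ((cmod (p1 x z))\<^sup>2 + (cmod (p2 x z))\<^sup>2)) * p1 x z"
    and eq2: "\<And>x z. \<i> * p2z x z = - p2xx x z - of_real \<kappa> * p1 x z - \<i> * of_real \<gamma> * p2 x z
                 + of_real (chi * ((cmod (p1 x z))\<^sup>2 + (cmod (p2 x z))\<^sup>2)) * p2 x z"
    and decay: "\<And>a b. \<exists>M. \<forall>x. \<forall>z\<in>{a..b}.
                   cmod (p1 x z) + cmod (p1x x z) + cmod (p1z x z)
                 + cmod (p2 x z) + cmod (p2x x z) + cmod (p2z x z) \<le> M / (1 + x\<^sup>2)"
begin

lemmas field_derivatives = dx1 dx2 dxx1 dxx2 dz1 dz2

lemmas field_continuous = smooth[THEN continuous_on_slice]

lemma p1xx_eq: "p1xx = (\<lambda>x z. - \<i> * p1z x z - of_real \<kappa> * p2 x z + \<i> * of_real \<gamma> * p1 x z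
    + of_real chi * (p1 x z * cnj (p1 x z) + p2 x z * cnj (p2 x z)) * p1 x z)"
  using eq1 by (intro ext) (simp add: complex_norm_square[symmetric] algebra_simps)

lemma p2xx_eq: "p2xx = (\<lambda>x z. - \<i> * p2z x z - of_real \<kappa> * p1 x z - \<i> * of_real \<gamma> * p2 x z
    + of_real chi * (p1 x z * cnj (p1 x z) + p2 x z * cnj (p2 x z)) * p2 x z)"
  using eq2 by (intro ext) (simp add: complex_norm_square[symmetric] algebra_simps)

lemma field_decay:
  "decays_on {a..b} p1" "decays_on {a..b} p2" "decays_on {a..b} p1x" "decays_on {a..b} p2x"
  "decays_on {a..b} p1z" "decays_on {a..b} p2z" "decays_on {a..b} p1xx" "decays_on {a..b} p2xx"
proof -
  obtain M where M: "\<And>x z. z \<in> {a..b} \<Longrightarrow> cmod (p1 x z) + cmod (p1x x z) + cmod (p1z x z)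
      + cmod (p2 x z) + cmod (p2x x z) + cmod (p2z x z) \<le> M / (1 + x\<^sup>2)"
    using decay[of a b] by blast
  have summand: "decays_on {a..b} g" if "\<And>x z. cmod (g x z) \<le> cmod (p1 x z) + cmod (p1x x z)
      + cmod (p1z x z) + cmod (p2 x z) + cmod (p2x x z) + cmod (p2z x z)" for g
    unfolding decays_on_def using M that order_trans by blast
  show p: "decays_on {a..b} p1" "decays_on {a..b} p2" "decays_on {a..b} p1x" "decays_on {a..b} p2x"
    "decays_on {a..b} p1z" "decays_on {a..b} p2z"
    by (intro summand, simp)+
  show "decays_on {a..b} p1xx" "decays_on {a..b} p2xx"
    unfolding p1xx_eq p2xx_eq by (intro decays_on_intros p)+
qed

text \<open>Local balance laws: once the second x-derivatives are eliminated with the field equations,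
  the z-derivative of each Stokes density is a source term plus the x-derivative of a flux.\<close>

lemma S0_balance:
  "Re (cnj (p1 x z) * p1z x z + cnj (p1z x z) * p1 x z + (cnj (p2 x z) * p2z x z + cnj (p2z x z) * p2 x z))
    = 2 * \<gamma> * Re (cnj (p1 x z) * p1 x z - cnj (p2 x z) * p2 x z)
    + Re (2 * \<i> * (cnj (p1 x z) * p1xx x z + cnj (p1x x z) * p1x x z
        + (cnj (p2 x z) * p2xx x z + cnj (p2x x z) * p2x x z)))"
  unfolding p1xx_eq p2xx_eq by (simp add: algebra_simps)

lemma S1_balance:
  "Re (cnj (p1 x z) * p2z x z + cnj (p1z x z) * p2 x z + (cnj (p2 x z) * p1z x z + cnj (p2z x z) * p1 x z))
    = 0 + Re (2 * \<i> * (cnj (p1 x z) * p2xx x z + cnj (p1x x z) * p2x x z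
        - (cnj (p1x x z) * p2x x z + cnj (p1xx x z) * p2 x z)))"
  unfolding p1xx_eq p2xx_eq by (simp add: algebra_simps)

lemma S2_balance:
  "Re (\<i> * (cnj (p1 x z) * p2z x z + cnj (p1z x z) * p2 x z - (cnj (p2 x z) * p1z x z + cnj (p2z x z) * p1 x z)))
    = - 2 * \<kappa> * Re (cnj (p1 x z) * p1 x z - cnj (p2 x z) * p2 x z)
    + Re (- 2 * (cnj (p1 x z) * p2xx x z + cnj (p1x x z) * p2x x z
        - (cnj (p1x x z) * p2x x z + cnj (p1xx x z) * p2 x z)))"
  unfolding p1xx_eq p2xx_eq by (simp add: algebra_simps)

lemma S3_balance:
  "Re (cnj (p1 x z) * p1z x z + cnj (p1z x z) * p1 x z - (cnj (p2 x z) * p2z x z + cnj (p2z x z) * p2 x z))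
    = 2 * \<gamma> * Re (cnj (p1 x z) * p1 x z + cnj (p2 x z) * p2 x z)
      + 2 * \<kappa> * Re (\<i> * (cnj (p1 x z) * p2 x z - cnj (p2 x z) * p1 x z))
    + Re (2 * \<i> * (cnj (p1 x z) * p1xx x z + cnj (p1x x z) * p1x x z
        - (cnj (p2 x z) * p2xx x z + cnj (p2x x z) * p2x x z)))"
  unfolding p1xx_eq p2xx_eq by (simp add: algebra_simps)

lemmas balance_law_intros = has_vector_derivative_add has_vector_derivative_diff
  has_vector_derivative_mult_right has_vector_derivative_mult has_vector_derivative_cnj
  field_derivatives continuous_intros field_continuous decays_on_intros field_decay

lemma S0_has_derivative: "(S0 p1 p2 has_real_derivative 2 * \<gamma> * S3 p1 p2 z) (at z)"
proof -
  have "((\<lambda>z. LINT x|lborel. Re (cnj (p1 x z) * p1 x z + cnj (p2 x z) * p2 x z)) has_real_derivative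
      (LINT x|lborel. 2 * \<gamma> * Re (cnj (p1 x z) * p1 x z - cnj (p2 x z) * p2 x z))) (at z)"
    by (rule has_real_derivative_integral_balance[where
          Q'="\<lambda>x z. cnj (p1 x z) * p1z x z + cnj (p1z x z) * p1 x z
            + (cnj (p2 x z) * p2z x z + cnj (p2z x z) * p2 x z)"
          and F="\<lambda>x z. 2 * \<i> * (cnj (p1 x z) * p1x x z + cnj (p2 x z) * p2x x z)"
          and f="\<lambda>x z. 2 * \<i> * (cnj (p1 x z) * p1xx x z + cnj (p1x x z) * p1x x z
            + (cnj (p2 x z) * p2xx x z + cnj (p2x x z) * p2x x z))"])
      (intro S0_balance balance_law_intros)+
  then show ?thesis
    by (simp add: S0_eq_integral_Re[abs_def] S3_eq_integral_Re)
qed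

lemma S1_has_derivative: "(S1 p1 p2 has_real_derivative 0) (at z)"
proof -
  have "((\<lambda>z. LINT x|lborel. Re (cnj (p1 x z) * p2 x z + cnj (p2 x z) * p1 x z)) has_real_derivative
      (LINT (x::real)|lborel. 0)) (at z)"
    by (rule has_real_derivative_integral_balance[where
          Q'="\<lambda>x z. cnj (p1 x z) * p2z x z + cnj (p1z x z) * p2 x z
            + (cnj (p2 x z) * p1z x z + cnj (p2z x z) * p1 x z)"
          and F="\<lambda>x z. 2 * \<i> * (cnj (p1 x z) * p2x x z - cnj (p1x x z) * p2 x z)"
          and f="\<lambda>x z. 2 * \<i> * (cnj (p1 x z) * p2xx x z + cnj (p1x x z) * p2x x z
            - (cnj (p1x x z) * p2x x z + cnj (p1xx x z) * p2 x z))"])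
      (intro S1_balance balance_law_intros)+
  then show ?thesis
    by (simp add: S1_def[abs_def])
qed

lemma S2_has_derivative: "(S2 p1 p2 has_real_derivative - 2 * \<kappa> * S3 p1 p2 z) (at z)"
proof -
  have "((\<lambda>z. LINT x|lborel. Re (\<i> * (cnj (p1 x z) * p2 x z - cnj (p2 x z) * p1 x z))) has_real_derivative
      (LINT x|lborel. - 2 * \<kappa> * Re (cnj (p1 x z) * p1 x z - cnj (p2 x z) * p2 x z))) (at z)"
    by (rule has_real_derivative_integral_balance[where
          Q'="\<lambda>x z. \<i> * (cnj (p1 x z) * p2z x z + cnj (p1z x z) * p2 x z
            - (cnj (p2 x z) * p1z x z + cnj (p2z x z) * p1 x z))"
          and F="\<lambda>x z. - 2 * (cnj (p1 x z) * p2x x z - cnj (p1x x z) * p2 x z)"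
          and f="\<lambda>x z. - 2 * (cnj (p1 x z) * p2xx x z + cnj (p1x x z) * p2x x z
            - (cnj (p1x x z) * p2x x z + cnj (p1xx x z) * p2 x z))"])
      (intro S2_balance balance_law_intros)+
  then show ?thesis
    by (simp add: S2_def[abs_def] S3_eq_integral_Re)
qed

lemma S3_has_derivative:
  "(S3 p1 p2 has_real_derivative 2 * \<gamma> * S0 p1 p2 z + 2 * \<kappa> * S2 p1 p2 z) (at z)"
proof -
  have "((\<lambda>z. LINT x|lborel. Re (cnj (p1 x z) * p1 x z - cnj (p2 x z) * p2 x z)) has_real_derivative
      (LINT x|lborel. 2 * \<gamma> * Re (cnj (p1 x z) * p1 x z + cnj (p2 x z) * p2 x z)
        + 2 * \<kappa> * Re (\<i> * (cnj (p1 x z) * p2 x z - cnj (p2 x z) * p1 x z)))) (at z)"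
    by (rule has_real_derivative_integral_balance[where
          Q'="\<lambda>x z. cnj (p1 x z) * p1z x z + cnj (p1z x z) * p1 x z
            - (cnj (p2 x z) * p2z x z + cnj (p2z x z) * p2 x z)"
          and F="\<lambda>x z. 2 * \<i> * (cnj (p1 x z) * p1x x z - cnj (p2 x z) * p2x x z)"
          and f="\<lambda>x z. 2 * \<i> * (cnj (p1 x z) * p1xx x z + cnj (p1x x z) * p1x x z
            - (cnj (p2 x z) * p2xx x z + cnj (p2x x z) * p2x x z))"])
      (intro S3_balance balance_law_intros)+
  moreover have "integrable lborel (\<lambda>x. Re (cnj (p1 x z) * p1 x z + cnj (p2 x z) * p2 x z))"
    "integrable lborel (\<lambda>x. Re (\<i> * (cnj (p1 x z) * p2 x z - cnj (p2 x z) * p1 x z)))"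
    by (intro decays_on_integrable_Re balance_law_intros)+
  ultimately show ?thesis
    by (simp add: S3_eq_integral_Re[abs_def] S0_eq_integral_Re S2_def)
qed

end

theorem mainTheorem7:
  fixes \<kappa> \<gamma> chi :: real
    and p1 p2 p1x p2x p1xx p2xx p1z p2z :: "real \<Rightarrow> real \<Rightarrow> complex"
  assumes params: "\<kappa> > \<gamma>" "\<gamma> \<ge> 0"
    and dx1: "\<And>x z. ((\<lambda>x. p1 x z) has_vector_derivative p1x x z) (at x)"
    and dx2: "\<And>x z. ((\<lambda>x. p2 x z) has_vector_derivative p2x x z) (at x)"
    and dxx1: "\<And>x z. ((\<lambda>x. p1x x z) has_vector_derivative p1xx x z) (at x)"
    and dxx2: "\<And>x z. ((\<lambda>x. p2x x z) has_vector_derivative p2xx x z) (at x)"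
    and dz1: "\<And>x z. ((\<lambda>z. p1 x z) has_vector_derivative p1z x z) (at z)"
    and dz2: "\<And>x z. ((\<lambda>z. p2 x z) has_vector_derivative p2z x z) (at z)"
    and smooth: "continuous_on UNIV (\<lambda>(x,z). p1 x z)" "continuous_on UNIV (\<lambda>(x,z). p2 x z)"
      "continuous_on UNIV (\<lambda>(x,z). p1x x z)" "continuous_on UNIV (\<lambda>(x,z). p2x x z)"
      "continuous_on UNIV (\<lambda>(x,z). p1xx x z)" "continuous_on UNIV (\<lambda>(x,z). p2xx x z)"
      "continuous_on UNIV (\<lambda>(x,z). p1z x z)" "continuous_on UNIV (\<lambda>(x,z). p2z x z)"
    and eq1: "\<And>x z. \<i> * p1z x z = - p1xx x z - of_real \<kappa> * p2 x z + \<i> * of_real \<gamma> * p1 x z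
                 + of_real (chi * ((cmod (p1 x z))\<^sup>2 + (cmod (p2 x z))\<^sup>2)) * p1 x z"
    and eq2: "\<And>x z. \<i> * p2z x z = - p2xx x z - of_real \<kappa> * p1 x z - \<i> * of_real \<gamma> * p2 x z
                 + of_real (chi * ((cmod (p1 x z))\<^sup>2 + (cmod (p2 x z))\<^sup>2)) * p2 x z"
    and decay: "\<And>a b. \<exists>M. \<forall>x. \<forall>z\<in>{a..b}.
                   cmod (p1 x z) + cmod (p1x x z) + cmod (p1z x z)
                 + cmod (p2 x z) + cmod (p2x x z) + cmod (p2z x z) \<le> M / (1 + x\<^sup>2)"
  shows "(\<forall>z. (S0 p1 p2 has_real_derivative 2 * \<gamma> * S3 p1 p2 z) (at z))
       \<and> (\<forall>z. (S1 p1 p2 has_real_derivative 0) (at z))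
       \<and> (\<forall>z. (S2 p1 p2 has_real_derivative - 2 * \<kappa> * S3 p1 p2 z) (at z))
       \<and> (\<forall>z. (S3 p1 p2 has_real_derivative 2 * \<gamma> * S0 p1 p2 z + 2 * \<kappa> * S2 p1 p2 z) (at z))
       \<and> (\<forall>z1 z2. S1 p1 p2 z1 = S1 p1 p2 z2)
       \<and> (\<forall>z1 z2. \<kappa> * S0 p1 p2 z1 + \<gamma> * S2 p1 p2 z1 = \<kappa> * S0 p1 p2 z2 + \<gamma> * S2 p1 p2 z2)
       \<and> (let \<omega> = sqrt (\<kappa>\<^sup>2 - \<gamma>\<^sup>2); C = \<kappa> * S0 p1 p2 0 + \<gamma> * S2 p1 p2 0 in
            \<exists>A1 A2. \<forall>z. S0 p1 p2 z = \<kappa> * C / \<omega>\<^sup>2 + A1 * cos (2 * \<omega> * z) + A2 * sin (2 * \<omega> * z))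
       \<and> bounded (range (S0 p1 p2))"
proof -
  interpret coupler_solution \<kappa> \<gamma> chi p1 p2 p1x p2x p1xx p2xx p1z p2z
    by unfold_locales (fact dx1 dx2 dxx1 dxx2 dz1 dz2 smooth eq1 eq2 decay)+
  define \<omega> where "\<omega> = sqrt (\<kappa>\<^sup>2 - \<gamma>\<^sup>2)"
  define C where "C = \<kappa> * S0 p1 p2 0 + \<gamma> * S2 p1 p2 0"
  have "\<gamma>\<^sup>2 < \<kappa>\<^sup>2"
    using params by (simp add: power_strict_mono)
  then obtain A1 A2 where S0_sinusoid:
    "S0 p1 p2 = (\<lambda>z. \<kappa> * C / \<omega>\<^sup>2 + A1 * cos (2 * \<omega> * z) + A2 * sin (2 * \<omega> * z))"
    using stokes_S0_sinusoidal[OF S0_has_derivative S2_has_derivative S3_has_derivative]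
    unfolding \<omega>_def C_def by blast
  then have "bounded (range (S0 p1 p2))"
    by (simp add: bounded_range_sinusoid)
  moreover have "S1 p1 p2 z1 = S1 p1 p2 z2" for z1 z2
    using DERIV_isconst_all[of "S1 p1 p2"] S1_has_derivative by blast
  ultimately show ?thesis
    unfolding Let_def \<omega>_def[symmetric] C_def[symmetric]
    using S0_has_derivative S1_has_derivative S2_has_derivative S3_has_derivative S0_sinusoid
      stokes_combination_constant[OF S0_has_derivative S2_has_derivative] by auto
qed

end
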